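(* Let $m=p_1^{\alpha_1}p_2^{\alpha_2}$, where $p_1,p_2>2$ are distinct primes and $\alpha_1,\alpha_2$ are positive integers. Let $t=\mathrm{ord}_m(2)$ and let $\gamma\in\mathbb{F}_{2^t}^*$ be a primitive $m$th root of unity. Let $E=\{e\in\mathbb{Z}: p_1^{\alpha_1}\nmid e,\ p_2^{\alpha_2}\nmid e\}$. Then $m$ is good if and only if there exist $u,v\in E$ with $u\not\equiv v\pmod m$ and $\det(A)=0$, where $$A=\begin{pmatrix}\gamma^{s_{01}u}&\gamma^{s_{01}v}&1\\ \gamma^{s_{10}u}&\gamma^{s_{10}v}&1\\ \gamma^{u}&\gamma^{v}&1\end{pmatrix}.$$
   Context: $\mathrm{ord}_m(2)$ is the multiplicative order of $2$ modulo $m$. The canonical set of $m$ is $S_m=\{s_{01},s_{10},s_{11}\}\subseteq\mathbb{Z}_m$, where for $\sigma=(\sigma_1,\sigma_2)\in\{0,1\}^2\setminus\{(0,0)\}$, $s_\sigma$ is the unique element of $\mathbb{Z}_m$ with $s_\sigma\equiv\sigma_1 \pmod{p_1^{\alpha_1}}$ and $s_\sigma\equiv \sigma_2\pmod{p_2^{\alpha_2}}$ (so $s_{11}=1$). An $S_m$-decoding polynomial is a polynomial $P(X)\in\mathbb{F}_{2^t}[X]$ such that $P(\gamma^s)=0$ for every $s\in S_m$ and $P(1)=1$. The number $m$ is called good if there exists an $S_m$-decoding polynomial with fewer than $4$ monomials (nonzero terms). *)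

theory Defs
  imports "HOL-Analysis.Analysis" "HOL-Computational_Algebra.Polynomial" "HOL-Number_Theory.Number_Theory"
begin

definition canon_elem :: "nat \<Rightarrow> nat \<Rightarrow> nat \<Rightarrow> nat \<Rightarrow> nat \<Rightarrow> nat \<Rightarrow> nat" where
  "canon_elem p1 a1 p2 a2 \<sigma>1 \<sigma>2 =
     (THE s. s < p1^a1 * p2^a2 \<and> [s = \<sigma>1] (mod p1^a1) \<and> [s = \<sigma>2] (mod p2^a2))"

definition canonical_set :: "nat \<Rightarrow> nat \<Rightarrow> nat \<Rightarrow> nat \<Rightarrow> nat set" where
  "canonical_set p1 a1 p2 a2 =
     {canon_elem p1 a1 p2 a2 0 1, canon_elem p1 a1 p2 a2 1 0, canon_elem p1 a1 p2 a2 1 1}"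

definition decoding_poly :: "nat set \<Rightarrow> 'a::field \<Rightarrow> 'a poly \<Rightarrow> bool" where
  "decoding_poly S \<gamma> P \<longleftrightarrow> (\<forall>s\<in>S. poly P (\<gamma> ^ s) = 0) \<and> poly P 1 = 1"

definition num_monomials :: "'a::zero poly \<Rightarrow> nat" where
  "num_monomials P = card {i. Polynomial.coeff P i \<noteq> 0}"

definition good :: "nat \<Rightarrow> nat \<Rightarrow> nat \<Rightarrow> nat \<Rightarrow> 'a::field \<Rightarrow> bool" where
  "good p1 a1 p2 a2 \<gamma> \<longleftrightarrow>
     (\<exists>P. decoding_poly (canonical_set p1 a1 p2 a2) \<gamma> P \<and> num_monomials P < 4)"

end

theory Submission
  imports Defs
begin

(*
  By the Chinese remainder theorem gamma = zeta1 * zeta2, where zeta1 = gamma^s10 and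
  zeta2 = gamma^s01 are primitive roots of unity of orders p1^a1 and p2^a2, and the column of A
  belonging to u is (zeta2^u, zeta1^u, (zeta1 zeta2)^u). A decoding polynomial a X^i + b X^j + c X^k
  is a coefficient vector of sum 1 annihilating the columns of i, j and k. Dividing by the i-th
  powers puts (b, c, a) into the kernel of A for u = j - i, v = k - i, so det A = 0; the four
  linear relations moreover force the powers of zeta1 at i, j, k to be pairwise distinct, and
  likewise for zeta2, which is the condition on u and v. Conversely, if det A = 0 then under
  that condition a nonzero kernel vector of A cannot have coordinate sum 0, so it scales to the
  coefficients of a decoding polynomial a X^u + b X^v + c.
*)

lemma det_eq_0_iff_nontrivial_kernel:
  fixes A :: "'a::field ^ 'n ^ 'n"
  shows "det A = 0 \<longleftrightarrow> (\<exists>x. x \<noteq> 0 \<and> A *v x = 0)"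
  using invertible_det_nz[of A] invertible_left_inverse[of A] matrix_left_invertible_ker[of A]
  by blast

lemma poly_eq_sum_monom_over_superset:
  fixes P :: "'a::comm_monoid_add poly"
  assumes "finite J" "{i. Polynomial.coeff P i \<noteq> 0} \<subseteq> J"
  shows "P = (\<Sum>l\<in>J. Polynomial.monom (Polynomial.coeff P l) l)"
proof (rule poly_eqI)
  fix n
  have "(\<Sum>l\<in>J. Polynomial.coeff (Polynomial.monom (Polynomial.coeff P l) l) n)
      = (if n \<in> J then Polynomial.coeff P n else 0)"
    using assms(1) by (simp add: sum.delta)
  then show "Polynomial.coeff P n =
      Polynomial.coeff (\<Sum>l\<in>J. Polynomial.monom (Polynomial.coeff P l) l) n"
    using assms(2) by (auto simp: coeff_sum)
qed

lemma finite_coeff_support: "finite {i. Polynomial.coeff P i \<noteq> 0}"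
  by (rule finite_subset[of _ "{..degree P}"]) (auto intro: le_degree)

lemma num_monomials_less_4_iff:
  fixes P :: "'a::comm_monoid_add poly"
  shows "num_monomials P < 4 \<longleftrightarrow>
    (\<exists>a b c i j k. P = Polynomial.monom a i + Polynomial.monom b j + Polynomial.monom c k)"
proof
  define I where "I = {i. Polynomial.coeff P i \<noteq> 0}"
  assume "num_monomials P < 4"
  then have "card I \<le> 3" unfolding num_monomials_def I_def by simp
  have "finite I" unfolding I_def by (rule finite_coeff_support)
  then obtain B where B: "finite B" "card B = 3 - card I" "B \<subseteq> - I"
    using infinite_arbitrarily_large[of "- I"] by (auto simp: Compl_eq_Diff_UNIV)
  then have "card (I \<union> B) = 3"
    using \<open>finite I\<close> \<open>card I \<le> 3\<close> by (subst card_Un_disjoint) auto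
  then obtain i j k where ijk: "I \<union> B = {i, j, k}" "i \<noteq> j" "j \<noteq> k" "i \<noteq> k"
    by (auto simp: card_3_iff)
  have "P = (\<Sum>l\<in>{i, j, k}. Polynomial.monom (Polynomial.coeff P l) l)"
    by (rule poly_eq_sum_monom_over_superset) (use ijk in \<open>auto simp: I_def\<close>)
  also have "\<dots> = Polynomial.monom (Polynomial.coeff P i) i
      + Polynomial.monom (Polynomial.coeff P j) j + Polynomial.monom (Polynomial.coeff P k) k"
    using ijk by (simp add: add.assoc)
  finally show
    "\<exists>a b c i j k. P = Polynomial.monom a i + Polynomial.monom b j + Polynomial.monom c k"
    by blast
next
  assume "\<exists>a b c i j k. P = Polynomial.monom a i + Polynomial.monom b j + Polynomial.monom c k"
  then obtain a b c i j k
    where P: "P = Polynomial.monom a i + Polynomial.monom b j + Polynomial.monom c k"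
    by blast
  have "{l. Polynomial.coeff P l \<noteq> 0} \<subseteq> {i, j, k}" unfolding P by auto
  then have "card {l. Polynomial.coeff P l \<noteq> 0} \<le> card {i, j, k}" by (rule card_mono[rotated]) simp
  also have "\<dots> \<le> 3" by (simp add: card_insert_le_m1)
  finally show "num_monomials P < 4" unfolding num_monomials_def by simp
qed

lemma power_int_eq_power_mod:
  fixes \<zeta> :: "'a::field"
  assumes "\<zeta> ^ N = 1" "N > 0"
  shows "\<zeta> powi e = \<zeta> ^ nat (e mod int N)"
proof -
  have "\<zeta> \<noteq> 0" using assms by (auto simp: zero_power)
  have "\<zeta> powi e = \<zeta> powi (int N * (e div int N)) * \<zeta> powi (e mod int N)"
    using \<open>\<zeta> \<noteq> 0\<close> by (simp flip: power_int_add)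
  also have "\<zeta> powi (int N * (e div int N)) = 1"
    by (simp add: power_int_mult assms(1))
  also have "\<zeta> powi (e mod int N) = \<zeta> ^ nat (e mod int N)"
    using assms(2) by (simp flip: power_int_of_nat)
  finally show ?thesis by simp
qed

lemma primitive_root_power_int_eq_1_iff:
  fixes \<gamma> :: "'a::field"
  assumes "\<gamma> ^ m = 1" "\<forall>k. 0 < k \<and> k < m \<longrightarrow> \<gamma> ^ k \<noteq> 1" "m > 0"
  shows "\<gamma> powi e = 1 \<longleftrightarrow> int m dvd e"
proof -
  have "\<gamma> ^ nat (e mod int m) = 1 \<longleftrightarrow> e mod int m = 0"
  proof
    assume "\<gamma> ^ nat (e mod int m) = 1"
    then have "\<not> (0 < nat (e mod int m) \<and> nat (e mod int m) < m)" using assms(2) by blast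
    moreover have "0 \<le> e mod int m" "e mod int m < int m" using assms(3) by simp_all
    ultimately show "e mod int m = 0" by linarith
  qed simp
  then show ?thesis
    using power_int_eq_power_mod[OF assms(1,3)] by (simp add: dvd_eq_mod_eq_0)
qed

lemma power_int_eq_iff_cong:
  fixes \<zeta> :: "'a::field"
  assumes "\<zeta> \<noteq> 0" "\<And>e. \<zeta> powi e = 1 \<longleftrightarrow> n dvd e"
  shows "\<zeta> powi u = \<zeta> powi v \<longleftrightarrow> [u = v] (mod n)"
proof -
  have "\<zeta> powi u = \<zeta> powi v \<longleftrightarrow> \<zeta> powi (u - v) = 1"
    using assms(1) by (auto simp: power_int_diff)
  also have "\<dots> \<longleftrightarrow> [u = v] (mod n)"
    by (simp add: assms(2) cong_iff_dvd_diff)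
  finally show ?thesis .
qed

lemma idempotent_power_int_eq_1_iff:
  fixes \<gamma> :: "'a::field"
  assumes root: "\<And>e. \<gamma> powi e = 1 \<longleftrightarrow> int (q1 * q2) dvd e"
    and s: "[s = 0] (mod q1)" "[s = 1] (mod q2)"
  shows "(\<gamma> ^ s) powi e = 1 \<longleftrightarrow> int q2 dvd e"
proof -
  have "(\<gamma> ^ s) powi e = \<gamma> powi (int s * e)" by (simp add: power_int_mult)
  then have "(\<gamma> ^ s) powi e = 1 \<longleftrightarrow> int q1 * int q2 dvd int s * e" by (simp add: root)
  also have "\<dots> \<longleftrightarrow> int q2 dvd e"
  proof
    assume "int q1 * int q2 dvd int s * e"
    then have "int q2 dvd int s * e" by (rule dvd_mult_right)
    moreover have "int q2 dvd (int s - 1) * e"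
      using s(2) by (simp add: cong_iff_dvd_diff flip: cong_int_iff)
    ultimately have "int q2 dvd int s * e - (int s - 1) * e" by (rule dvd_diff)
    then show "int q2 dvd e" by (simp add: algebra_simps)
  next
    assume "int q2 dvd e"
    moreover have "int q1 dvd int s" using s(1) by (simp add: cong_0_iff)
    ultimately show "int q1 * int q2 dvd int s * e" by (simp add: mult_dvd_mono)
  qed
  finally show ?thesis .
qed

lemma cong_mult_modulus_iff:
  fixes m n :: int
  assumes "coprime m n"
  shows "[u = v] (mod m * n) \<longleftrightarrow> [u = v] (mod m) \<and> [u = v] (mod n)"
proof
  assume "[u = v] (mod m * n)"
  then show "[u = v] (mod m) \<and> [u = v] (mod n)"
    by (simp add: cong_modulus_mult cong_modulus_mult[of _ _ n m] mult.commute)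
qed (use assms in \<open>blast intro: coprime_cong_mult\<close>)

lemma canon_elem_cong:
  assumes "coprime (p1 ^ a1) (p2 ^ a2)" "p1 > 0" "p2 > 0"
  shows "[canon_elem p1 a1 p2 a2 \<sigma>1 \<sigma>2 = \<sigma>1] (mod p1 ^ a1)"
    and "[canon_elem p1 a1 p2 a2 \<sigma>1 \<sigma>2 = \<sigma>2] (mod p2 ^ a2)"
proof -
  have "\<exists>!s. s < p1 ^ a1 * p2 ^ a2 \<and> [s = \<sigma>1] (mod p1 ^ a1) \<and> [s = \<sigma>2] (mod p2 ^ a2)"
    using assms by (intro binary_chinese_remainder_unique_nat) auto
  from theI'[OF this]
  show "[canon_elem p1 a1 p2 a2 \<sigma>1 \<sigma>2 = \<sigma>1] (mod p1 ^ a1)"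
    and "[canon_elem p1 a1 p2 a2 \<sigma>1 \<sigma>2 = \<sigma>2] (mod p2 ^ a2)"
    unfolding canon_elem_def by blast+
qed

lemma canon_elem_1_1:
  assumes "coprime (p1 ^ a1) (p2 ^ a2)" "1 < p1 ^ a1 * p2 ^ a2"
  shows "canon_elem p1 a1 p2 a2 1 1 = 1"
  unfolding canon_elem_def
proof (rule the1_equality)
  have "p1 ^ a1 * p2 ^ a2 \<noteq> 0" using assms(2) by linarith
  then show "\<exists>!s. s < p1 ^ a1 * p2 ^ a2 \<and> [s = 1] (mod p1 ^ a1) \<and> [s = 1] (mod p2 ^ a2)"
    using assms(1) by (intro binary_chinese_remainder_unique_nat) auto
qed (use assms(2) in auto)

lemma primitive_root_crt_split:
  fixes \<gamma> :: "'a::field"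
  assumes cop: "coprime (p1 ^ a1) (p2 ^ a2)" and "p1 > 0" "p2 > 0"
    and root: "\<And>e. \<gamma> powi e = 1 \<longleftrightarrow> int (p1 ^ a1 * p2 ^ a2) dvd e"
  defines "\<zeta>1 \<equiv> \<gamma> ^ canon_elem p1 a1 p2 a2 1 0" and "\<zeta>2 \<equiv> \<gamma> ^ canon_elem p1 a1 p2 a2 0 1"
  shows "\<zeta>1 powi e = 1 \<longleftrightarrow> int (p1 ^ a1) dvd e"
    and "\<zeta>2 powi e = 1 \<longleftrightarrow> int (p2 ^ a2) dvd e"
    and "\<zeta>1 * \<zeta>2 = \<gamma>"
    and "[u = v] (mod int (p1 ^ a1 * p2 ^ a2)) \<longleftrightarrow>
      \<zeta>1 powi u = \<zeta>1 powi v \<and> \<zeta>2 powi u = \<zeta>2 powi v"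
proof -
  let ?s10 = "canon_elem p1 a1 p2 a2 1 0" and ?s01 = "canon_elem p1 a1 p2 a2 0 1"
  note s10 = canon_elem_cong[OF assms(1-3), of 1 0] and s01 = canon_elem_cong[OF assms(1-3), of 0 1]
  have "p1 ^ a1 * p2 ^ a2 > 0" using assms(2,3) by simp
  then have "\<gamma> \<noteq> 0" using root[of "int (p1 ^ a1 * p2 ^ a2)"] by (auto simp: power_int_0_left_if)
  show \<zeta>1: "\<zeta>1 powi e = 1 \<longleftrightarrow> int (p1 ^ a1) dvd e" for e
    unfolding \<zeta>1_def
    by (rule idempotent_power_int_eq_1_iff) (use root s10 in \<open>simp_all add: ac_simps\<close>)
  show \<zeta>2: "\<zeta>2 powi e = 1 \<longleftrightarrow> int (p2 ^ a2) dvd e" for e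
    unfolding \<zeta>2_def by (rule idempotent_power_int_eq_1_iff) (use root s01 in simp_all)
  have "[?s10 + ?s01 = 1] (mod p1 ^ a1 * p2 ^ a2)"
    using s10 s01 cop by (intro coprime_cong_mult_nat) (auto dest: cong_add)
  then have "\<gamma> powi int (?s10 + ?s01) = \<gamma> powi 1"
    using \<open>\<gamma> \<noteq> 0\<close> by (subst power_int_eq_iff_cong[OF _ root]) (auto simp flip: cong_int_iff)
  then show "\<zeta>1 * \<zeta>2 = \<gamma>"
    unfolding power_int_of_nat by (simp add: \<zeta>1_def \<zeta>2_def power_add)
  have "\<zeta>1 \<noteq> 0" "\<zeta>2 \<noteq> 0" using \<open>\<gamma> \<noteq> 0\<close> by (simp_all add: \<zeta>1_def \<zeta>2_def)
  moreover have "coprime (int (p1 ^ a1)) (int (p2 ^ a2))"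
    using cop by (simp only: coprime_int_iff)
  ultimately show "[u = v] (mod int (p1 ^ a1 * p2 ^ a2)) \<longleftrightarrow>
      \<zeta>1 powi u = \<zeta>1 powi v \<and> \<zeta>2 powi u = \<zeta>2 powi v"
    by (simp add: cong_mult_modulus_iff
      power_int_eq_iff_cong[OF _ \<zeta>1] power_int_eq_iff_cong[OF _ \<zeta>2])
qed

lemma three_term_relation_separates:
  fixes a b c x1 x2 x3 y1 y2 y3 :: "'a::field"
  assumes "a + b + c = 1" "a * x1 + b * x2 + c * x3 = 0" "a * y1 + b * y2 + c * y3 = 0"
    and "a * (x1 * y1) + b * (x2 * y2) + c * (x3 * y3) = 0"
    and "x1 \<noteq> 0" "y3 \<noteq> 0"
  shows "x1 \<noteq> x2"
proof
  assume "x1 = x2"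
  then have "c * y3 * (x3 - x1)
      = (a * (x1 * y1) + b * (x2 * y2) + c * (x3 * y3)) - x1 * (a * y1 + b * y2 + c * y3)"
    by (simp add: algebra_simps)
  then have "c * (x3 - x1) = 0" using assms(3,4,6) by simp
  then have "a * x1 + b * x2 + c * x3 = x1 * (a + b + c)"
    using \<open>x1 = x2\<close> by (simp add: algebra_simps)
  then show False using assms(1,2,5) by simp
qed

lemma three_term_relation_distinct:
  fixes a b c x1 x2 x3 y1 y2 y3 :: "'a::field"
  assumes "a + b + c = 1" "a * x1 + b * x2 + c * x3 = 0" "a * y1 + b * y2 + c * y3 = 0"
    and "a * (x1 * y1) + b * (x2 * y2) + c * (x3 * y3) = 0"
    and "x1 \<noteq> 0" "x2 \<noteq> 0" "y1 \<noteq> 0" "y2 \<noteq> 0" "y3 \<noteq> 0"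
  shows "x1 \<noteq> x2" "x1 \<noteq> x3" "x2 \<noteq> x3"
  using three_term_relation_separates[of a b c x1 x2 x3 y1 y2 y3]
    three_term_relation_separates[of a c b x1 x3 x2 y1 y3 y2]
    three_term_relation_separates[of b c a x2 x3 x1 y2 y3 y1] assms
  by (simp_all add: ac_simps)

lemma three_term_relation_shift:
  fixes z :: "'a::field"
  assumes "z \<noteq> 0" "a * z ^ i + b * z ^ j + c * z ^ k = 0"
  shows "b * z powi (int j - int i) + c * z powi (int k - int i) + a = 0"
proof -
  have "b * z powi (int j - int i) + c * z powi (int k - int i) + a
      = (a * z ^ i + b * z ^ j + c * z ^ k) / z ^ i"
    using assms(1) by (simp add: power_int_diff field_simps)
  with assms(2) show ?thesis by simp
qed

(* The matrix A of the theorem, with x = zeta1^u, y = zeta2^u, x' = zeta1^v, y' = zeta2^v. *)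
definition decoding_matrix :: "'a::field \<Rightarrow> 'a \<Rightarrow> 'a \<Rightarrow> 'a \<Rightarrow> 'a ^ 3 ^ 3" where
  "decoding_matrix x y x' y' =
     vector [vector [y, y', 1], vector [x, x', 1], vector [x * y, x' * y', 1]]"

lemma decoding_matrix_mult_vector_eq_0_iff:
  "decoding_matrix x y x' y' *v vector [a, b, c] = 0 \<longleftrightarrow>
     a * y + b * y' + c = 0 \<and> a * x + b * x' + c = 0 \<and> a * (x * y) + b * (x' * y') + c = 0"
  by (simp add: decoding_matrix_def matrix_vector_mult_def vec_eq_iff forall_3 sum_3 ac_simps)

lemma decoding_kernel_sum_eq_0_imp_zero:
  fixes x y x' y' a b c :: "'a::field"
  assumes "x \<noteq> 1" "y \<noteq> 1" "y' \<noteq> 1" "(x, y) \<noteq> (x', y')"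
    and eq: "a * y + b * y' + c = 0" "a * x + b * x' + c = 0"
      "a * (x * y) + b * (x' * y') + c = 0"
    and sum: "a + b + c = 0"
  shows "a = 0 \<and> b = 0 \<and> c = 0"
proof -
  have c: "c = - a - b" using sum by (simp add: algebra_simps eq_neg_iff_add_eq_0)
  (* eliminate c and use x y - 1 = (x - 1) (y - 1) + (x - 1) + (y - 1) *)
  have "b * (y' - 1) * (x' - x) = 0"
    using eq sum by Groebner_Basis.algebra
  then consider "b = 0" | "x' = x" using assms(3) by auto
  then have "b = 0"
  proof cases
    case 1
    then show "b = 0" .
  next
    case 2
    then have "(a + b) * (x - 1) = 0" using eq(2) c by (simp add: algebra_simps)
    then have "a = - b" using assms(1) by (simp add: eq_neg_iff_add_eq_0)
    then have "b * (y' - y) = 0" using eq(1) c by (simp add: algebra_simps)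
    then show "b = 0" using 2 assms(4) by auto
  qed
  then have "a * (y - 1) = 0" using eq(1) c by (simp add: algebra_simps)
  then show ?thesis using \<open>b = 0\<close> c assms(2) by simp
qed

lemma det_decoding_matrix_eq_0_iff:
  fixes x y x' y' :: "'a::field"
  assumes "x \<noteq> 1" "y \<noteq> 1" "y' \<noteq> 1" "(x, y) \<noteq> (x', y')"
  shows "det (decoding_matrix x y x' y') = 0 \<longleftrightarrow>
    (\<exists>a b c. a + b + c = 1 \<and> a * y + b * y' + c = 0 \<and> a * x + b * x' + c = 0 \<and>
       a * (x * y) + b * (x' * y') + c = 0)"
proof
  assume "det (decoding_matrix x y x' y') = 0"
  then obtain w where "w \<noteq> 0" and ker: "decoding_matrix x y x' y' *v w = 0"
    by (auto simp: det_eq_0_iff_nontrivial_kernel)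
  define a b c where "a = w $ 1" and "b = w $ 2" and "c = w $ 3"
  have w: "w = vector [a, b, c]"
    by (simp add: a_def b_def c_def vec_eq_iff forall_3)
  have eq: "a * y + b * y' + c = 0" "a * x + b * x' + c = 0" "a * (x * y) + b * (x' * y') + c = 0"
    using ker unfolding w decoding_matrix_mult_vector_eq_0_iff by simp_all
  have "a + b + c \<noteq> 0"
    using decoding_kernel_sum_eq_0_imp_zero[OF assms eq] \<open>w \<noteq> 0\<close> w
    by (auto simp: vec_eq_iff forall_3)
  define r where "r = inverse (a + b + c)"
  have scale: "r * a * p + r * b * q + r * c = r * (a * p + b * q + c)" for p q
    by (simp add: algebra_simps)
  have "r * a + r * b + r * c = 1"
    using \<open>a + b + c \<noteq> 0\<close> by (simp add: r_def flip: distrib_left)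
  then show "\<exists>a b c. a + b + c = 1 \<and> a * y + b * y' + c = 0 \<and> a * x + b * x' + c = 0 \<and>
      a * (x * y) + b * (x' * y') + c = 0"
    using eq scale by (intro exI[of _ "r * a"] exI[of _ "r * b"] exI[of _ "r * c"]) simp
next
  assume "\<exists>a b c. a + b + c = 1 \<and> a * y + b * y' + c = 0 \<and> a * x + b * x' + c = 0 \<and>
    a * (x * y) + b * (x' * y') + c = 0"
  then obtain a b c where "a + b + c = 1"
    and "decoding_matrix x y x' y' *v vector [a, b, c] = 0"
    unfolding decoding_matrix_mult_vector_eq_0_iff by blast
  moreover have "vector [a, b, c] \<noteq> (0 :: 'a ^ 3)" using \<open>a + b + c = 1\<close>
    by (auto simp: vec_eq_iff forall_3)
  ultimately show "det (decoding_matrix x y x' y') = 0"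
    by (auto simp: det_eq_0_iff_nontrivial_kernel)
qed

lemma sparse_decoding_imp_det_decoding_matrix:
  fixes \<zeta>1 \<zeta>2 :: "'a::field"
  assumes "\<zeta>1 \<noteq> 0" "\<zeta>2 \<noteq> 0"
    and "num_monomials P < 4" "poly P 1 = 1" "poly P \<zeta>2 = 0" "poly P \<zeta>1 = 0" "poly P (\<zeta>1 * \<zeta>2) = 0"
  obtains u v where "\<zeta>1 powi u \<noteq> 1" "\<zeta>2 powi u \<noteq> 1" "\<zeta>1 powi v \<noteq> 1" "\<zeta>2 powi v \<noteq> 1"
    "(\<zeta>1 powi u, \<zeta>2 powi u) \<noteq> (\<zeta>1 powi v, \<zeta>2 powi v)"
    "det (decoding_matrix (\<zeta>1 powi u) (\<zeta>2 powi u) (\<zeta>1 powi v) (\<zeta>2 powi v)) = 0"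
proof -
  obtain a b c i j k where E: "a + b + c = 1"
    "a * \<zeta>2 ^ i + b * \<zeta>2 ^ j + c * \<zeta>2 ^ k = 0" "a * \<zeta>1 ^ i + b * \<zeta>1 ^ j + c * \<zeta>1 ^ k = 0"
    "a * (\<zeta>1 * \<zeta>2) ^ i + b * (\<zeta>1 * \<zeta>2) ^ j + c * (\<zeta>1 * \<zeta>2) ^ k = 0"
    using assms(3-) by (auto simp: num_monomials_less_4_iff poly_monom)
  then have E12: "a * (\<zeta>1 ^ i * \<zeta>2 ^ i) + b * (\<zeta>1 ^ j * \<zeta>2 ^ j) + c * (\<zeta>1 ^ k * \<zeta>2 ^ k) = 0"
    "a * (\<zeta>2 ^ i * \<zeta>1 ^ i) + b * (\<zeta>2 ^ j * \<zeta>1 ^ j) + c * (\<zeta>2 ^ k * \<zeta>1 ^ k) = 0"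
    by (simp_all add: power_mult_distrib mult.commute)
  have sep: "\<zeta>1 ^ i \<noteq> \<zeta>1 ^ j" "\<zeta>1 ^ i \<noteq> \<zeta>1 ^ k" "\<zeta>1 ^ j \<noteq> \<zeta>1 ^ k"
    "\<zeta>2 ^ i \<noteq> \<zeta>2 ^ j" "\<zeta>2 ^ i \<noteq> \<zeta>2 ^ k"
    using three_term_relation_distinct[OF E(1,3,2) E12(1)]
      three_term_relation_distinct[OF E(1,2,3) E12(2)] assms(1,2)
    by simp_all
  define u v where "u = int j - int i" and "v = int k - int i"
  have pw: "\<zeta> powi u = \<zeta> ^ j / \<zeta> ^ i" "\<zeta> powi v = \<zeta> ^ k / \<zeta> ^ i" if "\<zeta> \<noteq> 0" for \<zeta> :: 'a
    using that by (simp_all add: u_def v_def power_int_diff)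
  have shifted: "b * \<zeta> powi u + c * \<zeta> powi v + a = 0"
    if "\<zeta> \<noteq> 0" "a * \<zeta> ^ i + b * \<zeta> ^ j + c * \<zeta> ^ k = 0" for \<zeta> :: 'a
    using three_term_relation_shift[OF that] by (simp add: u_def v_def)
  have "\<zeta>1 powi u \<noteq> 1" "\<zeta>2 powi u \<noteq> 1" "\<zeta>1 powi v \<noteq> 1" "\<zeta>2 powi v \<noteq> 1"
    "(\<zeta>1 powi u, \<zeta>2 powi u) \<noteq> (\<zeta>1 powi v, \<zeta>2 powi v)"
    using sep assms(1,2) by (auto simp: pw divide_eq_1_iff)
  moreover have "det (decoding_matrix (\<zeta>1 powi u) (\<zeta>2 powi u) (\<zeta>1 powi v) (\<zeta>2 powi v)) = 0"
  proof (subst det_decoding_matrix_eq_0_iff)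
    show "\<exists>a b c. a + b + c = 1 \<and> a * \<zeta>2 powi u + b * \<zeta>2 powi v + c = 0 \<and>
        a * \<zeta>1 powi u + b * \<zeta>1 powi v + c = 0 \<and>
        a * (\<zeta>1 powi u * \<zeta>2 powi u) + b * (\<zeta>1 powi v * \<zeta>2 powi v) + c = 0"
      using E(1) shifted[OF _ E(2)] shifted[OF _ E(3)] shifted[OF _ E(4)] assms(1,2)
      by (intro exI[of _ b] exI[of _ c] exI[of _ a]) (simp add: power_int_mult_distrib ac_simps)
  qed fact+
  ultimately show ?thesis by (rule that)
qed

lemma det_decoding_matrix_imp_sparse_decoding:
  fixes \<zeta>1 \<zeta>2 :: "'a::field"
  assumes "\<zeta>1 ^ N = 1" "\<zeta>2 ^ N = 1" "N > 0"
    and "\<zeta>1 powi u \<noteq> 1" "\<zeta>2 powi u \<noteq> 1" "\<zeta>2 powi v \<noteq> 1"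
    and "(\<zeta>1 powi u, \<zeta>2 powi u) \<noteq> (\<zeta>1 powi v, \<zeta>2 powi v)"
    and "det (decoding_matrix (\<zeta>1 powi u) (\<zeta>2 powi u) (\<zeta>1 powi v) (\<zeta>2 powi v)) = 0"
  obtains P where "num_monomials P < 4" "poly P 1 = 1" "poly P \<zeta>2 = 0" "poly P \<zeta>1 = 0"
    "poly P (\<zeta>1 * \<zeta>2) = 0"
proof -
  obtain a b c where abc: "a + b + c = 1" "a * \<zeta>2 powi u + b * \<zeta>2 powi v + c = 0"
    "a * \<zeta>1 powi u + b * \<zeta>1 powi v + c = 0"
    "a * (\<zeta>1 powi u * \<zeta>2 powi u) + b * (\<zeta>1 powi v * \<zeta>2 powi v) + c = 0"
    using assms(4-) by (auto simp: det_decoding_matrix_eq_0_iff)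
  define P where "P = Polynomial.monom a (nat (u mod int N))
    + Polynomial.monom b (nat (v mod int N)) + Polynomial.monom c 0"
  have ev: "poly P \<zeta> = a * \<zeta> powi u + b * \<zeta> powi v + c" if "\<zeta> ^ N = 1" for \<zeta>
    using that assms(3) by (simp add: P_def poly_monom power_int_eq_power_mod)
  have "num_monomials P < 4" unfolding num_monomials_less_4_iff P_def by blast
  moreover have "poly P 1 = 1" using abc(1) by (simp add: P_def poly_monom)
  moreover have "poly P \<zeta>2 = 0" "poly P \<zeta>1 = 0" using abc ev assms(1,2) by simp_all
  moreover have "poly P (\<zeta>1 * \<zeta>2) = 0"
    using abc(4) ev[of "\<zeta>1 * \<zeta>2"] assms(1,2)
    by (simp add: power_mult_distrib power_int_mult_distrib)
  ultimately show ?thesis by (rule that)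
qed

lemma sparse_decoding_iff_det_decoding_matrix:
  fixes \<zeta>1 \<zeta>2 :: "'a::field"
  assumes "\<zeta>1 ^ N = 1" "\<zeta>2 ^ N = 1" "N > 0"
  shows "(\<exists>P. num_monomials P < 4 \<and> poly P 1 = 1 \<and> poly P \<zeta>2 = 0 \<and> poly P \<zeta>1 = 0 \<and>
            poly P (\<zeta>1 * \<zeta>2) = 0) \<longleftrightarrow>
    (\<exists>u v. \<zeta>1 powi u \<noteq> 1 \<and> \<zeta>2 powi u \<noteq> 1 \<and> \<zeta>1 powi v \<noteq> 1 \<and> \<zeta>2 powi v \<noteq> 1 \<and>
       (\<zeta>1 powi u, \<zeta>2 powi u) \<noteq> (\<zeta>1 powi v, \<zeta>2 powi v) \<and>
       det (decoding_matrix (\<zeta>1 powi u) (\<zeta>2 powi u) (\<zeta>1 powi v) (\<zeta>2 powi v)) = 0)"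
    (is "?sparse \<longleftrightarrow> ?det")
proof
  have "\<zeta>1 \<noteq> 0" "\<zeta>2 \<noteq> 0" using assms by (auto simp: zero_power)
  moreover assume ?sparse
  ultimately show ?det using sparse_decoding_imp_det_decoding_matrix by metis
next
  assume ?det
  then show ?sparse using det_decoding_matrix_imp_sparse_decoding[OF assms] by metis
qed

theorem lemma5:
  fixes p1 p2 a1 a2 m :: nat and \<gamma> :: "'a::{field,finite}"
  assumes "prime p1" "prime p2" "p1 > 2" "p2 > 2" "p1 \<noteq> p2"
    and "a1 > 0" "a2 > 0"
    and m_def: "m = p1 ^ a1 * p2 ^ a2"
    and card: "CARD('a) = 2 ^ ord m 2"
    and prim: "\<gamma> ^ m = 1" "\<forall>k. 0 < k \<and> k < m \<longrightarrow> \<gamma> ^ k \<noteq> 1"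
  shows "good p1 a1 p2 a2 \<gamma> \<longleftrightarrow>
    (\<exists>u v :: int.
       \<not> (int (p1 ^ a1) dvd u) \<and> \<not> (int (p2 ^ a2) dvd u) \<and>
       \<not> (int (p1 ^ a1) dvd v) \<and> \<not> (int (p2 ^ a2) dvd v) \<and>
       \<not> [u = v] (mod int m) \<and>
       (let s01 = int (canon_elem p1 a1 p2 a2 0 1);
            s10 = int (canon_elem p1 a1 p2 a2 1 0);
            s11 = int (canon_elem p1 a1 p2 a2 1 1);
            A = (vector [vector [\<gamma> powi (s01 * u), \<gamma> powi (s01 * v), 1],
                         vector [\<gamma> powi (s10 * u), \<gamma> powi (s10 * v), 1],
                         vector [\<gamma> powi (s11 * u), \<gamma> powi (s11 * v), 1]] :: 'a ^ 3 ^ 3)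
        in det A = 0))"
proof -
  have pos: "p1 > 0" "p2 > 0" using assms(3,4) by simp_all
  have cop: "coprime (p1 ^ a1) (p2 ^ a2)" using primes_coprime[OF assms(1,2,5)] by simp
  have "1 < p1 ^ a1" "1 < p2 ^ a2"
    using one_less_power[of p1 a1] one_less_power[of p2 a2] assms(3,4,6,7) by simp_all
  then have "1 < m" unfolding m_def using one_less_mult by simp
  have s11: "canon_elem p1 a1 p2 a2 1 1 = 1"
    using canon_elem_1_1[OF cop] \<open>1 < m\<close> unfolding m_def by blast
  have root: "\<gamma> powi e = 1 \<longleftrightarrow> int m dvd e" for e
    using primitive_root_power_int_eq_1_iff[OF prim] \<open>1 < m\<close> by simp
  define \<zeta>1 \<zeta>2 where "\<zeta>1 = \<gamma> ^ canon_elem p1 a1 p2 a2 1 0" and "\<zeta>2 = \<gamma> ^ canon_elem p1 a1 p2 a2 0 1"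
  note crt = primitive_root_crt_split[OF cop pos root[unfolded m_def], folded \<zeta>1_def \<zeta>2_def m_def]
  have \<zeta>_root: "\<zeta>1 ^ m = 1" "\<zeta>2 ^ m = 1"
    unfolding \<zeta>1_def \<zeta>2_def power_mult[symmetric] mult.commute[of _ m] power_mult prim(1)
    by simp_all
  have entries: "\<gamma> powi (int (canon_elem p1 a1 p2 a2 0 1) * e) = \<zeta>2 powi e"
    "\<gamma> powi (int (canon_elem p1 a1 p2 a2 1 0) * e) = \<zeta>1 powi e" for e
    by (simp_all add: power_int_mult \<zeta>1_def \<zeta>2_def)
  have entry_11: "\<gamma> powi (int (canon_elem p1 a1 p2 a2 1 1) * e) = \<zeta>1 powi e * \<zeta>2 powi e" for e
    by (simp only: s11 of_nat_1 mult_1 crt(3) flip: power_int_mult_distrib)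
  have "good p1 a1 p2 a2 \<gamma> \<longleftrightarrow> (\<exists>P. num_monomials P < 4 \<and> poly P 1 = 1 \<and> poly P \<zeta>2 = 0 \<and>
      poly P \<zeta>1 = 0 \<and> poly P (\<zeta>1 * \<zeta>2) = 0)"
    unfolding good_def decoding_poly_def canonical_set_def s11 crt(3) by (auto simp: \<zeta>1_def \<zeta>2_def)
  also have "\<dots> \<longleftrightarrow> (\<exists>u v. \<zeta>1 powi u \<noteq> 1 \<and> \<zeta>2 powi u \<noteq> 1 \<and> \<zeta>1 powi v \<noteq> 1 \<and> \<zeta>2 powi v \<noteq> 1 \<and>
       (\<zeta>1 powi u, \<zeta>2 powi u) \<noteq> (\<zeta>1 powi v, \<zeta>2 powi v) \<and>
       det (decoding_matrix (\<zeta>1 powi u) (\<zeta>2 powi u) (\<zeta>1 powi v) (\<zeta>2 powi v)) = 0)"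
    using \<open>1 < m\<close> by (intro sparse_decoding_iff_det_decoding_matrix[OF \<zeta>_root]) simp
  finally show ?thesis
    unfolding Let_def entries entry_11 crt(1,2)[symmetric] crt(4) by (simp add: decoding_matrix_def)
qed

end
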